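(* Let $\mathcal{X} \subseteq \mathbb{R}^m$ be countable with ground metric $d$, and let $\widehat\nu = \sum_{j=1}^N \widehat\nu_j \delta_{\widehat x_j}$ be a probability mass function supported on $N$ distinct points $\widehat x_1,\dots,\widehat x_N \in \mathcal{X}$ with $\widehat\nu_j > 0$ and $\sum_j \widehat\nu_j = 1$. For $\varepsilon \ge 0$ let $\mathbb{B}_{\mathbb{W}}(\widehat\nu,\varepsilon) = \{\nu \in \mathcal{M}(\mathcal{X}) : \mathbb{W}(\nu,\widehat\nu) \le \varepsilon\}$. Then for any $\varepsilon \ge 0$ and $x \in \mathcal{X}$, $$\sup_{\nu \in \mathbb{B}_{\mathbb{W}}(\widehat\nu,\varepsilon)} \nu(x) = \max\Big\{ \sum_{j=1}^N T_j : T \in \mathbb{R}^N_+,\ \sum_{j=1}^N d(x,\widehat x_j)\, T_j \le \varepsilon,\ T_j \le \widehat\nu_j \ \forall j \in [N] \Big\}.$$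
   Context: $\mathcal{M}(\mathcal{X})$ is the set of probability mass functions supported on $\mathcal{X}$; $[N] = \{1,\dots,N\}$. The type-1 Wasserstein distance is $\mathbb{W}(\nu_1,\nu_2) = \inf_{\lambda \in \Lambda(\nu_1,\nu_2)} \mathbb{E}_\lambda[d(x_1,x_2)]$, where $\Lambda(\nu_1,\nu_2)$ is the set of couplings on $\mathcal{X}\times\mathcal{X}$ with marginals $\nu_1,\nu_2$. *)

theory Defs
  imports "HOL-Analysis.Analysis" "HOL-Probability.Probability"
begin

definition couplings :: "'a pmf \<Rightarrow> 'a pmf \<Rightarrow> ('a \<times> 'a) pmf set" where
  "couplings \<nu>1 \<nu>2 = {c. map_pmf fst c = \<nu>1 \<and> map_pmf snd c = \<nu>2}"

text \<open>Type-1 Wasserstein distance w.r.t. ground metric d (valued in ennreal,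
  since the expected cost may be infinite).\<close>
definition wasserstein :: "('a \<Rightarrow> 'a \<Rightarrow> real) \<Rightarrow> 'a pmf \<Rightarrow> 'a pmf \<Rightarrow> ennreal" where
  "wasserstein d \<nu>1 \<nu>2 =
     (INF c\<in>couplings \<nu>1 \<nu>2. \<integral>\<^sup>+ p. ennreal (d (fst p) (snd p)) \<partial>(measure_pmf c))"

definition pmfs_on :: "'a set \<Rightarrow> 'a pmf set" where
  "pmfs_on X = {\<nu>. set_pmf \<nu> \<subseteq> X}"

definition wball :: "'a set \<Rightarrow> ('a \<Rightarrow> 'a \<Rightarrow> real) \<Rightarrow> 'a pmf \<Rightarrow> real \<Rightarrow> 'a pmf set" where
  "wball X d \<nu>h \<epsilon> = {\<nu> \<in> pmfs_on X. wasserstein d \<nu> \<nu>h \<le> ennreal \<epsilon>}"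

definition metric_on :: "'a set \<Rightarrow> ('a \<Rightarrow> 'a \<Rightarrow> real) \<Rightarrow> bool" where
  "metric_on X d \<longleftrightarrow>
     (\<forall>x\<in>X. \<forall>y\<in>X. 0 \<le> d x y \<and> (d x y = 0 \<longleftrightarrow> x = y) \<and> d x y = d y x) \<and>
     (\<forall>x\<in>X. \<forall>y\<in>X. \<forall>z\<in>X. d x z \<le> d x y + d y z)"

definition lp_feasible :: "('a \<Rightarrow> 'a \<Rightarrow> real) \<Rightarrow> nat \<Rightarrow> (nat \<Rightarrow> 'a) \<Rightarrow> (nat \<Rightarrow> real)
    \<Rightarrow> real \<Rightarrow> 'a \<Rightarrow> (nat \<Rightarrow> real) set" where
  "lp_feasible d N xh w \<epsilon> x =
     {T. (\<forall>j\<in>{1..N}. 0 \<le> T j \<and> T j \<le> w j) \<and> (\<Sum>j=1..N. d x (xh j) * T j) \<le> \<epsilon>}"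

end

theory Submission
  imports Defs
begin

(* Given T, move the fraction T_j / w_j of the mass at xh_j to x: the induced
   coupling costs sum_j d(x, xh_j) T_j <= eps, and the new distribution puts mass at least
   sum_j T_j on x. Conversely, for nu in the ball and delta > 0 take a coupling of cost below
   eps + delta; the masses T_j it transports from xh_j to x are feasible for the budget
   eps + delta and sum to nu(x). Scaling the entries with d(x, xh_j) > 0 by eps / (eps + delta)
   makes them feasible for the budget eps while losing at most delta * sum_j 1 / d(x, xh_j).
   Letting delta -> 0 bounds nu(x) by the optimal value of the program, which is attained by
   compactness. *)

lemma wasserstein_le_coupling_cost:
  assumes "c \<in> couplings \<nu>1 \<nu>2"
  shows "wasserstein d \<nu>1 \<nu>2 \<le> (\<integral>\<^sup>+ q. ennreal (d (fst q) (snd q)) \<partial>measure_pmf c)"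
  using assms unfolding wasserstein_def by (rule INF_lower)

lemma pmf_le_pmf_map_snd: "pmf c (a, b) \<le> pmf (map_pmf snd c) b"
proof -
  have "pmf c (a, b) = measure_pmf.prob c {(a, b)}" by (simp add: measure_pmf_single)
  also have "\<dots> \<le> measure_pmf.prob c (snd -` {b})"
    by (rule measure_pmf.finite_measure_mono) auto
  also have "\<dots> = pmf (map_pmf snd c) b" by (simp add: pmf_map)
  finally show ?thesis .
qed

lemma pmf_map_fst_eq_sum:
  assumes "finite B" and "set_pmf (map_pmf snd c) \<subseteq> B"
  shows "pmf (map_pmf fst c) a = (\<Sum>b\<in>B. pmf c (a, b))"
proof -
  have "fst -` {a} \<inter> set_pmf c = Pair a ` B \<inter> set_pmf c"
    using assms(2) by force
  then have "measure_pmf.prob c (fst -` {a}) = measure_pmf.prob c (Pair a ` B)"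
    by (metis measure_Int_set_pmf)
  also have "\<dots> = (\<Sum>b\<in>B. pmf c (a, b))"
    using assms(1) by (simp add: measure_measure_pmf_finite sum.reindex inj_on_def)
  finally show ?thesis by (simp add: pmf_map)
qed

lemma sum_cost_le_nn_integral:
  assumes "finite B" and "\<And>b. b \<in> B \<Longrightarrow> 0 \<le> d a b"
  shows "ennreal (\<Sum>b\<in>B. d a b * pmf c (a, b)) \<le> (\<integral>\<^sup>+ q. ennreal (d (fst q) (snd q)) \<partial>measure_pmf c)"
proof -
  let ?P = "Pair a ` B"
  have "ennreal (\<Sum>b\<in>B. d a b * pmf c (a, b)) = (\<Sum>q\<in>?P. ennreal (d (fst q) (snd q)) * pmf c q)"
    using assms by (simp add: sum.reindex inj_on_def sum_ennreal[symmetric] ennreal_mult'')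
  also have "\<dots> = (\<integral>\<^sup>+ q. ennreal (d (fst q) (snd q)) * indicator ?P q \<partial>measure_pmf c)"
    using assms(1) by (subst nn_integral_measure_pmf_support[where A="?P"]) (auto intro!: sum.cong)
  also have "\<dots> \<le> (\<integral>\<^sup>+ q. ennreal (d (fst q) (snd q)) \<partial>measure_pmf c)"
    by (intro nn_integral_mono) (auto split: split_indicator)
  finally show ?thesis .
qed

definition transfer_coupling :: "'a \<Rightarrow> ('a \<Rightarrow> real) \<Rightarrow> 'a pmf \<Rightarrow> ('a \<times> 'a) pmf" where
  "transfer_coupling x r \<mu> =
     bind_pmf \<mu> (\<lambda>y. map_pmf (\<lambda>b. (if b then x else y, y)) (bernoulli_pmf (r y)))"

lemma map_snd_transfer_coupling: "map_pmf snd (transfer_coupling x r \<mu>) = \<mu>"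
  unfolding transfer_coupling_def map_bind_pmf by (simp add: map_pmf_comp bind_return_pmf')

lemma set_pmf_map_fst_transfer_coupling:
  "set_pmf (map_pmf fst (transfer_coupling x r \<mu>)) \<subseteq> insert x (set_pmf \<mu>)"
  unfolding transfer_coupling_def by auto

lemma nn_integral_cost_transfer_coupling:
  assumes "\<And>y. y \<in> set_pmf \<mu> \<Longrightarrow> 0 \<le> r y \<and> r y \<le> 1 \<and> 0 \<le> d x y \<and> d y y = 0"
  shows "(\<integral>\<^sup>+ q. ennreal (d (fst q) (snd q)) \<partial>measure_pmf (transfer_coupling x r \<mu>))
    = (\<integral>\<^sup>+ y. ennreal (r y * d x y) \<partial>measure_pmf \<mu>)"
  unfolding transfer_coupling_def using assms
  by (auto simp: AE_measure_pmf_iff ennreal_mult' mult.commute intro!: nn_integral_cong_AE)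

lemma pmf_map_fst_transfer_coupling_ge:
  assumes "\<And>y. y \<in> set_pmf \<mu> \<Longrightarrow> 0 \<le> r y \<and> r y \<le> 1"
  shows "(\<integral>y. r y \<partial>measure_pmf \<mu>) \<le> pmf (map_pmf fst (transfer_coupling x r \<mu>)) x"
proof -
  let ?move = "\<lambda>y. map_pmf (\<lambda>b. if b then x else y) (bernoulli_pmf (r y))"
  have "r y \<le> pmf (?move y) x" if "y \<in> set_pmf \<mu>" for y
  proof -
    have "r y = measure_pmf.prob (bernoulli_pmf (r y)) {True}"
      using assms[OF that] by (simp add: measure_pmf_single)
    also have "\<dots> \<le> measure_pmf.prob (bernoulli_pmf (r y)) ((\<lambda>b. if b then x else y) -` {x})"
      by (rule measure_pmf.finite_measure_mono) auto
    finally show ?thesis by (simp add: pmf_map)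
  qed
  then have "(\<integral>y. r y \<partial>measure_pmf \<mu>) \<le> (\<integral>y. pmf (?move y) x \<partial>measure_pmf \<mu>)"
    using assms
    by (intro integral_mono_AE measure_pmf.integrable_const_bound[where B=1])
       (auto simp: AE_measure_pmf_iff pmf_le_1)
  also have "\<dots> = pmf (map_pmf fst (transfer_coupling x r \<mu>)) x"
    unfolding transfer_coupling_def map_bind_pmf pmf_bind by (simp add: map_pmf_comp)
  finally show ?thesis .
qed

lemma lp_feasible_has_max:
  assumes "\<And>j. j \<in> {1..N} \<Longrightarrow> 0 \<le> w j" and "0 \<le> \<epsilon>"
  shows "\<exists>T\<in>lp_feasible d N xh w \<epsilon> x.
           \<forall>T'\<in>lp_feasible d N xh w \<epsilon> x. (\<Sum>j=1..N. T' j) \<le> (\<Sum>j=1..N. T j)"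
proof -
  \<comment> \<open>lp_feasible leaves T j free for j outside {1..N}, so it is not compact; maximise over
    the truncated points instead.\<close>
  define truncate :: "(nat \<Rightarrow> real) \<Rightarrow> nat \<Rightarrow> real"
    where "truncate T j = (if j \<in> {1..N} then T j else 0)" for T j
  define K :: "(nat \<Rightarrow> real) set"
    where "K = PiE UNIV (\<lambda>j. if j \<in> {1..N} then {0..w j} else {0})"
  define F where "F = K \<inter> {T. (\<Sum>j=1..N. d x (xh j) * T j) \<le> \<epsilon>}"
  have "compactin (product_topology (\<lambda>_. euclidean) UNIV) K"
    unfolding K_def compactin_PiE by auto
  then have "compact K" by (simp add: euclidean_product_topology)
  moreover have "closed {T::nat \<Rightarrow> real. (\<Sum>j=1..N. d x (xh j) * T j) \<le> \<epsilon>}"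
    by (intro closed_Collect_le continuous_intros) auto
  ultimately have "compact F" unfolding F_def by (rule compact_Int_closed)
  have F_iff: "truncate T \<in> F \<longleftrightarrow> T \<in> lp_feasible d N xh w \<epsilon> x" for T
    unfolding F_def K_def lp_feasible_def truncate_def by (auto simp: PiE_iff)
  have "(\<lambda>_. 0) \<in> lp_feasible d N xh w \<epsilon> x"
    using assms unfolding lp_feasible_def by auto
  then have "F \<noteq> {}" using F_iff by blast
  moreover have "continuous_on F (\<lambda>T. \<Sum>j=1..N. T j)"
    by (intro continuous_intros continuous_on_subset[OF continuous_on_product_coordinates subset_UNIV])
  ultimately obtain T where "T \<in> F" and T_max: "\<And>T'. T' \<in> F \<Longrightarrow> (\<Sum>j=1..N. T' j) \<le> (\<Sum>j=1..N. T j)"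
    using continuous_attains_sup[OF \<open>compact F\<close>] by blast
  have truncate_T: "truncate T = T"
  proof
    fix j
    have "T j \<in> (if j \<in> {1..N} then {0..w j} else {0})"
      using \<open>T \<in> F\<close> unfolding F_def K_def by (auto simp: PiE_iff)
    then show "truncate T j = T j" unfolding truncate_def by auto
  qed
  have sum_truncate: "(\<Sum>j=1..N. truncate T' j) = (\<Sum>j=1..N. T' j)" for T'
    unfolding truncate_def by simp
  show ?thesis
  proof (intro bexI ballI)
    show "T \<in> lp_feasible d N xh w \<epsilon> x" using \<open>T \<in> F\<close> F_iff truncate_T by metis
    show "(\<Sum>j=1..N. T' j) \<le> (\<Sum>j=1..N. T j)" if "T' \<in> lp_feasible d N xh w \<epsilon> x" for T'
      using T_max[of "truncate T'"] F_iff that sum_truncate by simp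
  qed
qed

lemma lp_feasible_shrink_budget:
  assumes T: "T \<in> lp_feasible d N xh w (\<epsilon> + \<delta>) x"
    and "0 \<le> \<epsilon>" and "0 < \<delta>" and d_nonneg: "\<And>j. j \<in> {1..N} \<Longrightarrow> 0 \<le> d x (xh j)"
  shows "\<exists>T'\<in>lp_feasible d N xh w \<epsilon> x.
           (\<Sum>j=1..N. T j) \<le> (\<Sum>j=1..N. T' j) + \<delta> * (\<Sum>j=1..N. 1 / d x (xh j))"
proof -
  \<comment> \<open>Since 1 / 0 = 0, coordinates with d x (xh j) = 0 contribute nothing to the error term; they
    are left unscaled.\<close>
  define \<theta> where "\<theta> = \<epsilon> / (\<epsilon> + \<delta>)"
  define T' where "T' j = (if d x (xh j) = 0 then T j else \<theta> * T j)" for j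
  have T_bounds: "0 \<le> T j" "T j \<le> w j" if "j \<in> {1..N}" for j
    using T that unfolding lp_feasible_def by auto
  have cost_terms: "0 \<le> d x (xh j) * T j" if "j \<in> {1..N}" for j
    using d_nonneg[OF that] T_bounds[OF that] by simp
  have cost: "(\<Sum>j=1..N. d x (xh j) * T j) \<le> \<epsilon> + \<delta>"
    using T unfolding lp_feasible_def by auto
  have "0 \<le> \<theta>" "\<theta> \<le> 1" unfolding \<theta>_def using assms by auto
  have "(\<Sum>j=1..N. d x (xh j) * T' j) = \<theta> * (\<Sum>j=1..N. d x (xh j) * T j)"
    unfolding T'_def sum_distrib_left by (intro sum.cong) auto
  also have "\<dots> \<le> \<theta> * (\<epsilon> + \<delta>)"
    using cost \<open>0 \<le> \<theta>\<close> by (rule mult_left_mono)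
  also have "\<dots> = \<epsilon>" unfolding \<theta>_def using assms by simp
  finally have "(\<Sum>j=1..N. d x (xh j) * T' j) \<le> \<epsilon>" .
  moreover have "0 \<le> T' j \<and> T' j \<le> w j" if "j \<in> {1..N}" for j
    using T_bounds[OF that] mult_left_le_one_le[OF T_bounds(1)[OF that] \<open>0 \<le> \<theta>\<close> \<open>\<theta> \<le> 1\<close>]
      \<open>0 \<le> \<theta>\<close> unfolding T'_def by auto
  ultimately have T'_feasible: "T' \<in> lp_feasible d N xh w \<epsilon> x"
    unfolding lp_feasible_def by blast
  have gap: "T j - T' j \<le> \<delta> * (1 / d x (xh j))" if j: "j \<in> {1..N}" for j
  proof (cases "d x (xh j) = 0")
    case False
    then have "0 < d x (xh j)" using d_nonneg[OF j] by simp
    have "d x (xh j) * T j \<le> (\<Sum>i=1..N. d x (xh i) * T i)"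
      using cost_terms j by (intro member_le_sum) auto
    then have "d x (xh j) * T j \<le> \<epsilon> + \<delta>" using cost by linarith
    then have "T j \<le> (\<epsilon> + \<delta>) / d x (xh j)"
      using \<open>0 < d x (xh j)\<close> by (simp add: pos_le_divide_eq mult.commute)
    then have "\<delta> / (\<epsilon> + \<delta>) * T j \<le> \<delta> / (\<epsilon> + \<delta>) * ((\<epsilon> + \<delta>) / d x (xh j))"
      using assms by (intro mult_left_mono) auto
    moreover have "T j - T' j = \<delta> / (\<epsilon> + \<delta>) * T j"
      using False assms unfolding T'_def \<theta>_def by (simp add: field_simps)
    ultimately show ?thesis using assms by simp
  qed (simp add: T'_def)
  have "(\<Sum>j=1..N. T j) - (\<Sum>j=1..N. T' j) \<le> \<delta> * (\<Sum>j=1..N. 1 / d x (xh j))"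
    using gap unfolding sum_subtractf[symmetric] sum_distrib_left by (rule sum_mono)
  with T'_feasible show ?thesis by (intro bexI) auto
qed

locale pmf_on_points =
  fixes N :: nat and xh :: "nat \<Rightarrow> 'a" and w :: "nat \<Rightarrow> real" and \<nu>h :: "'a pmf"
  assumes inj_xh: "inj_on xh {1..N}"
    and pmf_\<nu>h: "\<And>y. pmf \<nu>h y = (\<Sum>j=1..N. if xh j = y then w j else 0)"
begin

lemma sum_if_xh_eq:
  assumes "k \<in> {1..N}"
  shows "(\<Sum>j=1..N. if xh j = xh k then g j else 0) = g k"
proof -
  have "(\<Sum>j=1..N. if xh j = xh k then g j else 0) = (\<Sum>j=1..N. if j = k then g j else 0)"
    using inj_xh assms by (intro sum.cong) (auto dest: inj_onD)
  also have "\<dots> = g k" using assms by simp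
  finally show ?thesis .
qed

lemma pmf_xh: "k \<in> {1..N} \<Longrightarrow> pmf \<nu>h (xh k) = w k"
  unfolding pmf_\<nu>h by (rule sum_if_xh_eq)

lemma w_nonneg: "k \<in> {1..N} \<Longrightarrow> 0 \<le> w k"
  using pmf_xh pmf_nonneg by metis

lemma set_pmf_subset: "set_pmf \<nu>h \<subseteq> xh ` {1..N}"
proof
  fix y assume "y \<in> set_pmf \<nu>h"
  show "y \<in> xh ` {1..N}"
  proof (rule ccontr)
    assume "y \<notin> xh ` {1..N}"
    then have "pmf \<nu>h y = 0" unfolding pmf_\<nu>h by (intro sum.neutral) auto
    with \<open>y \<in> set_pmf \<nu>h\<close> show False by (simp add: set_pmf_iff)
  qed
qed

lemma integral_eq_sum: "(\<integral>y. f y \<partial>measure_pmf \<nu>h) = (\<Sum>k=1..N. f (xh k) * w k)"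
proof -
  have "(\<integral>y. f y \<partial>measure_pmf \<nu>h) = (\<Sum>y\<in>xh ` {1..N}. f y * pmf \<nu>h y)"
    using set_pmf_subset by (intro integral_measure_pmf_real) auto
  then show ?thesis unfolding sum.reindex[OF inj_xh] by (simp add: pmf_xh)
qed

lemma nn_integral_eq_sum:
  "(\<integral>\<^sup>+y. f y \<partial>measure_pmf \<nu>h) = (\<Sum>k=1..N. f (xh k) * ennreal (w k))"
proof -
  have "(\<integral>\<^sup>+y. f y \<partial>measure_pmf \<nu>h) = (\<Sum>y\<in>xh ` {1..N}. f y * pmf \<nu>h y)"
    using set_pmf_subset by (intro nn_integral_measure_pmf_support) auto
  then show ?thesis unfolding sum.reindex[OF inj_xh] by (simp add: pmf_xh)
qed

lemma lp_feasible_realised_by_pmf: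
  assumes T: "T \<in> lp_feasible d N xh w \<epsilon> x"
    and d_xh: "\<And>y. y \<in> xh ` {1..N} \<Longrightarrow> 0 \<le> d x y \<and> d y y = 0"
  obtains \<nu> where "set_pmf \<nu> \<subseteq> insert x (xh ` {1..N})" and "wasserstein d \<nu> \<nu>h \<le> ennreal \<epsilon>"
    and "(\<Sum>j=1..N. T j) \<le> pmf \<nu> x"
proof -
  define r where "r y = (\<Sum>j=1..N. if xh j = y then T j / w j else 0)" for y
  have T_bounds: "0 \<le> T k" "T k \<le> w k" if "k \<in> {1..N}" for k
    using T that unfolding lp_feasible_def by auto
  have r_xh: "r (xh k) = T k / w k" if "k \<in> {1..N}" for k
    unfolding r_def using that by (rule sum_if_xh_eq)
  have mass: "r (xh k) * w k = T k" if "k \<in> {1..N}" for k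
    using T_bounds[OF that] r_xh[OF that] by (cases "w k = 0") auto
  have r_bounds: "0 \<le> r y \<and> r y \<le> 1" if y: "y \<in> set_pmf \<nu>h" for y
  proof -
    obtain k where k: "k \<in> {1..N}" and "y = xh k" using y set_pmf_subset by blast
    then show ?thesis
      using T_bounds[OF k] r_xh[OF k] w_nonneg[OF k] by (auto simp: divide_le_eq_1)
  qed
  have d_y: "0 \<le> d x y \<and> d y y = 0" if "y \<in> set_pmf \<nu>h" for y
    using that set_pmf_subset d_xh by blast
  define c where "c = transfer_coupling x r \<nu>h"
  define \<nu> where "\<nu> = map_pmf fst c"
  have "c \<in> couplings \<nu> \<nu>h"
    unfolding couplings_def \<nu>_def c_def by (simp add: map_snd_transfer_coupling)
  then have "wasserstein d \<nu> \<nu>h \<le> (\<integral>\<^sup>+ q. ennreal (d (fst q) (snd q)) \<partial>measure_pmf c)"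
    by (rule wasserstein_le_coupling_cost)
  also have "\<dots> = (\<integral>\<^sup>+ y. ennreal (r y * d x y) \<partial>measure_pmf \<nu>h)"
    unfolding c_def using r_bounds d_y by (intro nn_integral_cost_transfer_coupling) auto
  also have "\<dots> = (\<Sum>k=1..N. ennreal (r (xh k) * d x (xh k)) * ennreal (w k))"
    by (rule nn_integral_eq_sum)
  also have "\<dots> = (\<Sum>k=1..N. ennreal (d x (xh k) * T k))"
  proof (rule sum.cong[OF refl])
    fix k assume k: "k \<in> {1..N}"
    have "ennreal (r (xh k) * d x (xh k)) * ennreal (w k) = ennreal (r (xh k) * d x (xh k) * w k)"
      using w_nonneg[OF k] by (rule ennreal_mult''[symmetric])
    also have "\<dots> = ennreal (d x (xh k) * T k)"
      unfolding mass[OF k, symmetric] by (simp add: ac_simps)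
    finally show "ennreal (r (xh k) * d x (xh k)) * ennreal (w k) = ennreal (d x (xh k) * T k)" .
  qed
  also have "\<dots> = ennreal (\<Sum>k=1..N. d x (xh k) * T k)"
    using d_xh T_bounds by (intro sum_ennreal) auto
  also have "\<dots> \<le> ennreal \<epsilon>"
    using T unfolding lp_feasible_def by (auto intro: ennreal_leI)
  finally have "wasserstein d \<nu> \<nu>h \<le> ennreal \<epsilon>" .
  moreover have "(\<Sum>j=1..N. T j) \<le> pmf \<nu> x"
  proof -
    have "(\<Sum>j=1..N. T j) = (\<integral>y. r y \<partial>measure_pmf \<nu>h)"
      by (simp add: integral_eq_sum mass)
    also have "\<dots> \<le> pmf \<nu> x"
      unfolding \<nu>_def c_def using r_bounds by (rule pmf_map_fst_transfer_coupling_ge)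
    finally show ?thesis .
  qed
  moreover have "set_pmf \<nu> \<subseteq> insert x (xh ` {1..N})"
    using set_pmf_map_fst_transfer_coupling[of x r \<nu>h] set_pmf_subset
    unfolding \<nu>_def c_def by blast
  ultimately show ?thesis using that by blast
qed

lemma lp_feasible_of_wasserstein_less:
  assumes "wasserstein d \<nu> \<nu>h < ennreal \<epsilon>"
    and d_nonneg: "\<And>j. j \<in> {1..N} \<Longrightarrow> 0 \<le> d x (xh j)"
  obtains T where "T \<in> lp_feasible d N xh w \<epsilon> x" and "pmf \<nu> x \<le> (\<Sum>j=1..N. T j)"
proof -
  obtain c where "c \<in> couplings \<nu> \<nu>h"
    and cost: "(\<integral>\<^sup>+ q. ennreal (d (fst q) (snd q)) \<partial>measure_pmf c) < ennreal \<epsilon>"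
    using assms(1) unfolding wasserstein_def INF_less_iff by blast
  then have fst_c: "map_pmf fst c = \<nu>" and snd_c: "map_pmf snd c = \<nu>h"
    unfolding couplings_def by auto
  define T where "T j = pmf c (x, xh j)" for j
  have "pmf \<nu> x = (\<Sum>y\<in>xh ` {1..N}. pmf c (x, y))"
    unfolding fst_c[symmetric] using set_pmf_subset snd_c by (intro pmf_map_fst_eq_sum) auto
  also have "\<dots> = (\<Sum>j=1..N. T j)"
    unfolding T_def sum.reindex[OF inj_xh] by simp
  finally have "pmf \<nu> x = (\<Sum>j=1..N. T j)" .
  have "T j \<le> w j" if "j \<in> {1..N}" for j
    using pmf_le_pmf_map_snd[of c x "xh j"] pmf_xh[OF that] unfolding T_def snd_c by simp
  moreover have "(\<Sum>j=1..N. d x (xh j) * T j) \<le> \<epsilon>"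
  proof -
    have "ennreal (\<Sum>j=1..N. d x (xh j) * T j) = ennreal (\<Sum>y\<in>xh ` {1..N}. d x y * pmf c (x, y))"
      unfolding T_def sum.reindex[OF inj_xh] by simp
    also have "\<dots> \<le> (\<integral>\<^sup>+ q. ennreal (d (fst q) (snd q)) \<partial>measure_pmf c)"
      using d_nonneg by (intro sum_cost_le_nn_integral) auto
    finally have "ennreal (\<Sum>j=1..N. d x (xh j) * T j) < ennreal \<epsilon>"
      using cost by (rule le_less_trans)
    moreover have "0 \<le> (\<Sum>j=1..N. d x (xh j) * T j)"
      using d_nonneg unfolding T_def by (intro sum_nonneg) auto
    ultimately show ?thesis by (simp add: ennreal_less_iff)
  qed
  ultimately have "T \<in> lp_feasible d N xh w \<epsilon> x"
    unfolding lp_feasible_def T_def by auto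
  with \<open>pmf \<nu> x = (\<Sum>j=1..N. T j)\<close> show ?thesis using that by simp
qed

lemma pmf_le_lp_max:
  assumes "wasserstein d \<nu> \<nu>h \<le> ennreal \<epsilon>" and "0 \<le> \<epsilon>"
    and lp_max: "\<And>T. T \<in> lp_feasible d N xh w \<epsilon> x \<Longrightarrow> (\<Sum>j=1..N. T j) \<le> V"
    and d_nonneg: "\<And>j. j \<in> {1..N} \<Longrightarrow> 0 \<le> d x (xh j)"
  shows "pmf \<nu> x \<le> V"
proof (rule field_le_epsilon)
  fix e :: real assume "0 < e"
  define K where "K = (\<Sum>j=1..N. 1 / d x (xh j))"
  define \<delta> where "\<delta> = e / (K + 1)"
  have "0 \<le> K" unfolding K_def using d_nonneg by (intro sum_nonneg) auto
  then have "0 < \<delta>" and "\<delta> * K \<le> e"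
    unfolding \<delta>_def using \<open>0 < e\<close> by (auto simp: field_simps)
  have "wasserstein d \<nu> \<nu>h < ennreal (\<epsilon> + \<delta>)"
    using assms(1,2) \<open>0 < \<delta>\<close> by (auto simp: ennreal_less_iff intro: le_less_trans)
  then obtain T where T: "T \<in> lp_feasible d N xh w (\<epsilon> + \<delta>) x" and "pmf \<nu> x \<le> (\<Sum>j=1..N. T j)"
    using d_nonneg by (rule lp_feasible_of_wasserstein_less)
  moreover obtain T' where "T' \<in> lp_feasible d N xh w \<epsilon> x"
    and "(\<Sum>j=1..N. T j) \<le> (\<Sum>j=1..N. T' j) + \<delta> * K"
    using lp_feasible_shrink_budget[OF T \<open>0 \<le> \<epsilon>\<close> \<open>0 < \<delta>\<close> d_nonneg] unfolding K_def by blast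
  moreover from this(1) have "(\<Sum>j=1..N. T' j) \<le> V" by (rule lp_max)
  ultimately show "pmf \<nu> x \<le> V + e" using \<open>\<delta> * K \<le> e\<close> by linarith
qed

end

theorem mainTheorem5:
  fixes X :: "'a::euclidean_space set" and d :: "'a \<Rightarrow> 'a \<Rightarrow> real"
    and N :: nat and xh :: "nat \<Rightarrow> 'a" and w :: "nat \<Rightarrow> real"
    and \<nu>h :: "'a pmf" and \<epsilon> :: real and x :: 'a
  assumes "countable X"
    and "metric_on X d"
    and "inj_on xh {1..N}"
    and "xh ` {1..N} \<subseteq> X"
    and "\<forall>j\<in>{1..N}. w j > 0"
    and "(\<Sum>j=1..N. w j) = 1"
    and "\<forall>y. pmf \<nu>h y = (\<Sum>j=1..N. if xh j = y then w j else 0)"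
    and "\<epsilon> \<ge> 0"
    and "x \<in> X"
  shows "\<exists>T\<in>lp_feasible d N xh w \<epsilon> x.
           (\<Sum>j=1..N. T j) = (SUP \<nu>\<in>wball X d \<nu>h \<epsilon>. pmf \<nu> x) \<and>
           (\<forall>T'\<in>lp_feasible d N xh w \<epsilon> x. (\<Sum>j=1..N. T' j) \<le> (\<Sum>j=1..N. T j))"
proof -
  interpret pmf_on_points N xh w \<nu>h
    using assms(3,7) by unfold_locales auto
  have d_xh: "0 \<le> d x y \<and> d y y = 0" if "y \<in> xh ` {1..N}" for y
    using assms(2,4,9) that unfolding metric_on_def by blast
  obtain T where T: "T \<in> lp_feasible d N xh w \<epsilon> x"
    and T_max: "\<forall>T'\<in>lp_feasible d N xh w \<epsilon> x. (\<Sum>j=1..N. T' j) \<le> (\<Sum>j=1..N. T j)"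
    using lp_feasible_has_max[of N w \<epsilon> d xh x] assms(5,8) by fastforce
  have upper: "pmf \<nu> x \<le> (\<Sum>j=1..N. T j)" if "\<nu> \<in> wball X d \<nu>h \<epsilon>" for \<nu>
    using that assms(8) T_max d_xh unfolding wball_def by (intro pmf_le_lp_max[where d = d]) auto
  obtain \<nu>\<^sub>0 where "set_pmf \<nu>\<^sub>0 \<subseteq> insert x (xh ` {1..N})"
    and "wasserstein d \<nu>\<^sub>0 \<nu>h \<le> ennreal \<epsilon>" and attains: "(\<Sum>j=1..N. T j) \<le> pmf \<nu>\<^sub>0 x"
    using T d_xh by (rule lp_feasible_realised_by_pmf)
  then have "\<nu>\<^sub>0 \<in> wball X d \<nu>h \<epsilon>"
    using assms(4,9) unfolding wball_def pmfs_on_def by auto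
  moreover from this have "pmf \<nu>\<^sub>0 x = (\<Sum>j=1..N. T j)"
    using upper attains by (blast intro: antisym)
  ultimately have "(SUP \<nu>\<in>wball X d \<nu>h \<epsilon>. pmf \<nu> x) = (\<Sum>j=1..N. T j)"
    using upper by (intro cSup_eq_maximum) (auto intro: image_eqI[where x = "\<nu>\<^sub>0"])
  with T T_max show ?thesis by auto
qed

end
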